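(* Let $A$ be an $n\times n$ matrix with a designated set of large positions, and let $(X,Y)$ be a restriction with $|X|\ge1$ that is $q$-good for some $q<1/50$. Then $(X,Y)$ has a $13q$-strong line.
   Context: Let $A=(a_{ij})_{i,j\in[n]}$ with a designated set $L\subseteq[n]\times[n]$ of large positions. A restriction is $(X,Y)$ with $X,Y\subseteq[n]$, $|X|=|Y|$; a generalized diagonal of $A[X,Y]$ is $\{(i,\sigma(i)):i\in X\}$ for a bijection $\sigma:X\to Y$, random meaning uniform $\sigma$; it is good if it contains exactly one large position; $(X,Y)$ is $q$-good if a random generalized diagonal is good with probability $\ge1-q$. For $i\in X$, row $i$ is $p$-strong for $(X,Y)$ if at least $(1-p)|Y|$ of the positions $\{(i,j):j\in Y\}$ are large; column $j\in Y$ is $p$-strong if at least $(1-p)|X|$ of $\{(i,j):i\in X\}$ are large. A $p$-strong line is a $p$-strong row or column. *)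

theory Defs
  imports Complex_Main "HOL-Library.FuncSet"
begin

text \<open>Positions are pairs (i,j) with i,j in [n] = {1..n}; L is the set of large positions.\<close>

definition is_restriction :: "nat \<Rightarrow> nat set \<Rightarrow> nat set \<Rightarrow> bool" where
  "is_restriction n X Y \<longleftrightarrow> X \<subseteq> {1..n} \<and> Y \<subseteq> {1..n} \<and> card X = card Y"

definition bijections :: "nat set \<Rightarrow> nat set \<Rightarrow> (nat \<Rightarrow> nat) set" where
  "bijections X Y = {\<sigma> \<in> X \<rightarrow>\<^sub>E Y. bij_betw \<sigma> X Y}"

definition gen_diagonal :: "(nat \<Rightarrow> nat) \<Rightarrow> nat set \<Rightarrow> (nat \<times> nat) set" where
  "gen_diagonal \<sigma> X = (\<lambda>i. (i, \<sigma> i)) ` X"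

definition good_diagonal :: "(nat \<times> nat) set \<Rightarrow> (nat \<times> nat) set \<Rightarrow> bool" where
  "good_diagonal L D \<longleftrightarrow> card (D \<inter> L) = 1"

definition q_good :: "(nat \<times> nat) set \<Rightarrow> nat set \<Rightarrow> nat set \<Rightarrow> real \<Rightarrow> bool" where
  "q_good L X Y q \<longleftrightarrow>
     real (card {\<sigma> \<in> bijections X Y. good_diagonal L (gen_diagonal \<sigma> X)})
       / real (card (bijections X Y)) \<ge> 1 - q"

definition strong_row :: "(nat \<times> nat) set \<Rightarrow> nat set \<Rightarrow> nat set \<Rightarrow> real \<Rightarrow> nat \<Rightarrow> bool" where
  "strong_row L X Y p i \<longleftrightarrow> i \<in> X \<and>
     real (card {j \<in> Y. (i, j) \<in> L}) \<ge> (1 - p) * real (card Y)"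

definition strong_col :: "(nat \<times> nat) set \<Rightarrow> nat set \<Rightarrow> nat set \<Rightarrow> real \<Rightarrow> nat \<Rightarrow> bool" where
  "strong_col L X Y p j \<longleftrightarrow> j \<in> Y \<and>
     real (card {i \<in> X. (i, j) \<in> L}) \<ge> (1 - p) * real (card X)"

definition has_strong_line :: "(nat \<times> nat) set \<Rightarrow> nat set \<Rightarrow> nat set \<Rightarrow> real \<Rightarrow> bool" where
  "has_strong_line L X Y p \<longleftrightarrow> (\<exists>i. strong_row L X Y p i) \<or> (\<exists>j. strong_col L X Y p j)"

end

(*
  Let m = |X| and let hits \<sigma> be the number of large positions on the diagonal of \<sigma>. A q-good
  restriction has at most q m! bad diagonals. Comparing the first moment of hits, |L \<inter> X \<times> Y| (m-1)!,
  with the second one via AM-GM shows that there are at most 1.31 m large positions. Averaging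
  over them gives a large position (k, j) through which many good diagonals pass. Exchanging the
  images of k and another row i keeps such a diagonal good only if exactly one of (k, \<sigma> i) and
  (i, j) is large, so there are at least 0.7 (m-1)^2 such discordant pairs, and this forces row k
  or column j to carry at least 1 + 0.7 (m-1) large positions. Finally, every diagonal through a
  non-large position of that line that avoids the large positions off the line has no large
  position at all; as there are at most 0.92 (m-1) large positions off the line, this gives at
  least 0.08 (m-1)! bad diagonals per non-large position, so the line has at most 13 q m of them.
*)

theory Submission
  imports Defs "HOL-Combinatorics.Transposition"
begin

lemma bijectionsD:
  assumes "\<sigma> \<in> bijections X Y"
  shows "bij_betw \<sigma> X Y" and "x \<in> X \<Longrightarrow> \<sigma> x \<in> Y" and "x \<notin> X \<Longrightarrow> \<sigma> x = undefined"
  using assms by (auto simp: bijections_def bij_betw_def)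

lemma bijections_eq_iff:
  assumes "\<sigma> \<in> bijections X Y" "x \<in> X" "x' \<in> X"
  shows "\<sigma> x = \<sigma> x' \<longleftrightarrow> x = x'"
  using assms by (auto simp: bijections_def bij_betw_def dest: inj_onD)

lemma bijectionsI:
  assumes "bij_betw \<sigma> X Y" "\<And>x. x \<notin> X \<Longrightarrow> \<sigma> x = undefined"
  shows "\<sigma> \<in> bijections X Y"
  using assms by (auto simp: bijections_def bij_betw_def)

lemma finite_bijections: "finite X \<Longrightarrow> finite Y \<Longrightarrow> finite (bijections X Y)"
  by (rule finite_subset[of _ "X \<rightarrow>\<^sub>E Y"]) (auto simp: bijections_def intro: finite_PiE)

lemma bij_betw_restrict_bijections_fixing:
  assumes "i \<in> X" "j \<in> Y"
  shows "bij_betw (\<lambda>\<sigma>. restrict \<sigma> (X - {i})) {\<sigma> \<in> bijections X Y. \<sigma> i = j}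
           (bijections (X - {i}) (Y - {j}))"
proof (rule bij_betw_byWitness[where f' = "\<lambda>\<tau>. \<tau>(i := j)"])
  show "\<forall>\<sigma> \<in> {\<sigma> \<in> bijections X Y. \<sigma> i = j}. (restrict \<sigma> (X - {i}))(i := j) = \<sigma>"
    by (auto simp: fun_eq_iff dest: bijectionsD(3))
  show "\<forall>\<tau> \<in> bijections (X - {i}) (Y - {j}). restrict (\<tau>(i := j)) (X - {i}) = \<tau>"
    by (auto simp: fun_eq_iff dest: bijectionsD(3))
  show "(\<lambda>\<sigma>. restrict \<sigma> (X - {i})) ` {\<sigma> \<in> bijections X Y. \<sigma> i = j} \<subseteq> bijections (X - {i}) (Y - {j})"
  proof clarify
    fix \<sigma> assume \<sigma>: "\<sigma> \<in> bijections X Y" "j = \<sigma> i"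
    then have "bij_betw \<sigma> (X - {i}) (Y - {\<sigma> i})"
      using assms by (intro bij_betw_DiffI) (auto simp: bij_betw_singletonI dest: bijectionsD(1))
    then show "restrict \<sigma> (X - {i}) \<in> bijections (X - {i}) (Y - {\<sigma> i})"
      by (intro bijectionsI) (auto simp: bij_betw_cong[of "X - {i}" "restrict \<sigma> (X - {i})" \<sigma>])
  qed
  show "(\<lambda>\<tau>. \<tau>(i := j)) ` bijections (X - {i}) (Y - {j}) \<subseteq> {\<sigma> \<in> bijections X Y. \<sigma> i = j}"
  proof (rule image_subsetI)
    fix \<tau> assume \<tau>: "\<tau> \<in> bijections (X - {i}) (Y - {j})"
    have "bij_betw (\<tau>(i := j)) (X - {i}) (Y - {j})"
      using bijectionsD(1)[OF \<tau>] bij_betw_cong[of "X - {i}" "\<tau>(i := j)" \<tau>] by simp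
    then have "bij_betw (\<tau>(i := j)) ((X - {i}) \<union> {i}) ((Y - {j}) \<union> {j})"
      using notIn_Un_bij_betw[of i "X - {i}" "\<tau>(i := j)" "Y - {j}"] by simp
    then have "bij_betw (\<tau>(i := j)) X Y"
      using assms by (simp add: insert_absorb)
    then show "\<tau>(i := j) \<in> {\<sigma> \<in> bijections X Y. \<sigma> i = j}"
      using assms bijectionsD(3)[OF \<tau>] by (auto intro: bijectionsI)
  qed
qed

lemma card_bijections:
  assumes "finite X" "finite Y" "card X = card Y"
  shows "card (bijections X Y) = fact (card X)"
  using assms
proof (induction "card X" arbitrary: X Y)
  case 0
  then have "bijections X Y = {\<lambda>_. undefined}"
    by (auto simp: bijections_def bij_betw_def)
  then show ?case using 0 by simp
next
  case (Suc n)
  then obtain i where i: "i \<in> X" by fastforce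
  have "bijections X Y = (\<Union>j\<in>Y. {\<sigma> \<in> bijections X Y. \<sigma> i = j})"
    using bijectionsD(2)[OF _ i] by auto
  moreover have "card (\<Union>j\<in>Y. {\<sigma> \<in> bijections X Y. \<sigma> i = j})
      = (\<Sum>j\<in>Y. card {\<sigma> \<in> bijections X Y. \<sigma> i = j})"
    using Suc.prems by (intro card_UN_disjoint) (auto simp: finite_bijections)
  ultimately have "card (bijections X Y) = (\<Sum>j\<in>Y. card {\<sigma> \<in> bijections X Y. \<sigma> i = j})"
    by simp
  also have "\<dots> = (\<Sum>j\<in>Y. fact n)"
  proof (rule sum.cong[OF refl])
    fix j assume j: "j \<in> Y"
    have "card {\<sigma> \<in> bijections X Y. \<sigma> i = j} = card (bijections (X - {i}) (Y - {j}))"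
      using bij_betw_same_card[OF bij_betw_restrict_bijections_fixing[OF i j]] .
    also have "\<dots> = fact n"
    proof -
      have "card (X - {i}) = n" "card (Y - {j}) = n"
        using Suc.hyps(2) Suc.prems i j by simp_all
      then show ?thesis
        using Suc.hyps(1)[of "X - {i}" "Y - {j}"] Suc.prems(1,2) by simp
    qed
    finally show "card {\<sigma> \<in> bijections X Y. \<sigma> i = j} = fact n" .
  qed
  also have "\<dots> = fact (card X)"
    using Suc.hyps(2)[symmetric] Suc.prems(3) by simp
  finally show ?case .
qed

lemma card_bijections_fixing:
  assumes "finite X" "finite Y" "card X = card Y" "i \<in> X" "j \<in> Y"
  shows "card {\<sigma> \<in> bijections X Y. \<sigma> i = j} = fact (card X - 1)"
  using bij_betw_same_card[OF bij_betw_restrict_bijections_fixing[OF assms(4,5)]]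
    card_bijections[of "X - {i}" "Y - {j}"] assms by simp

lemma card_bijections_fixing2:
  assumes "finite X" "finite Y" "card X = card Y" "i \<in> X" "j \<in> Y" "i' \<in> X" "j' \<in> Y"
    and "i \<noteq> i'" "j \<noteq> j'"
  shows "card {\<sigma> \<in> bijections X Y. \<sigma> i = j \<and> \<sigma> i' = j'} = fact (card X - 2)"
proof -
  let ?r = "\<lambda>\<sigma>. restrict \<sigma> (X - {i})"
  have bij: "bij_betw ?r {\<sigma> \<in> bijections X Y. \<sigma> i = j} (bijections (X - {i}) (Y - {j}))"
    by (rule bij_betw_restrict_bijections_fixing[OF assms(4,5)])
  let ?S = "{\<sigma> \<in> bijections X Y. \<sigma> i = j \<and> \<sigma> i' = j'}"
  let ?T = "{\<tau> \<in> bijections (X - {i}) (Y - {j}). \<tau> i' = j'}"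
  have "inj_on ?r ?S"
    using bij_betw_imp_inj_on[OF bij] by (rule inj_on_subset) blast
  moreover have "?r ` ?S = ?T"
  proof
    show "?r ` ?S \<subseteq> ?T"
    proof (rule image_subsetI)
      fix \<sigma> assume \<sigma>: "\<sigma> \<in> ?S"
      then have "?r \<sigma> \<in> bijections (X - {i}) (Y - {j})"
        using bij_betw_apply[OF bij] by simp
      then show "?r \<sigma> \<in> ?T" using \<sigma> assms(6,8) by simp
    qed
    show "?T \<subseteq> ?r ` ?S"
    proof
      fix \<tau> assume \<tau>: "\<tau> \<in> ?T"
      then have "\<tau> \<in> ?r ` {\<sigma> \<in> bijections X Y. \<sigma> i = j}"
        using bij_betw_imp_surj_on[OF bij] by simp
      then obtain \<sigma> where "\<sigma> \<in> bijections X Y" "\<sigma> i = j" "\<tau> = ?r \<sigma>" by blast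
      then show "\<tau> \<in> ?r ` ?S" using \<tau> assms(6,8) by simp
    qed
  qed
  ultimately have "card ?S = card ?T"
    using card_image by fastforce
  also have "\<dots> = fact (card X - 2)"
    using card_bijections_fixing[of "X - {i}" "Y - {j}" i' j'] assms by (simp add: numeral_2_eq_2)
  finally show ?thesis .
qed

lemma card_bijections_fixing2_le:
  assumes "finite X" "finite Y" "card X = card Y" "i \<in> X" "j \<in> Y" "i' \<in> X" "j' \<in> Y" "i \<noteq> i'"
  shows "card {\<sigma> \<in> bijections X Y. \<sigma> i = j \<and> \<sigma> i' = j'} \<le> fact (card X - 2)"
proof (cases "j = j'")
  case True
  have "\<sigma> \<notin> bijections X Y" if "\<sigma> i = j" "\<sigma> i' = j'" for \<sigma>
    using that True bijections_eq_iff[of \<sigma> X Y i i'] assms(4,6,8) by auto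
  then have "{\<sigma> \<in> bijections X Y. \<sigma> i = j \<and> \<sigma> i' = j'} = {}" by auto
  then show ?thesis by (metis card.empty le0)
qed (use card_bijections_fixing2[OF assms] in simp)

lemma fact_diff_one_eq:
  assumes "2 \<le> m"
  shows "(fact (m - 1) :: real) = (real m - 1) * fact (m - 2)"
proof -
  obtain k where "m = Suc (Suc k)" using assms by (metis add_2_eq_Suc le_Suc_ex)
  then show ?thesis by simp
qed

lemma fact_eq_diff_two:
  assumes "2 \<le> m"
  shows "(fact m :: real) = real m * (real m - 1) * fact (m - 2)"
proof -
  obtain k where "m = Suc (Suc k)" using assms by (metis add_2_eq_Suc le_Suc_ex)
  then show ?thesis by (simp add: algebra_simps)
qed

lemma of_nat_le_one_hit_plus_am_gm:
  fixes l :: real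
  assumes "0 < l"
  shows "real z \<le> of_bool (z = 1) + (l * of_bool (2 \<le> z) + real z ^ 2 / l) / 2"
proof (cases "2 \<le> z")
  case True
  have "2 * l * real z \<le> l ^ 2 + real z ^ 2"
    using sum_squares_bound[of l "real z"] by (simp add: power2_eq_square)
  then show ?thesis
    using True assms by (simp add: field_simps power2_eq_square)
next
  case False
  then have "z = 0 \<or> z = 1" by auto
  then show ?thesis using assms by auto
qed

lemma large_count_arith:
  fixes N m q F :: real
  assumes m: "2 \<le> m" and F: "0 < F" and N: "0 < N" and q: "q < 1/50"
    and ineq: "N * ((m - 1) * F) \<le> m * (m - 1) * F
      + (12 * N / m * (q * (m * (m - 1) * F)) + (N * ((m - 1) * F) + N\<^sup>2 * F) / (12 * N / m)) / 2"
  shows "N \<le> 131/100 * m"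
proof -
  have "m * (m - 1) * F
      + (12 * N / m * (q * (m * (m - 1) * F)) + (N * ((m - 1) * F) + N\<^sup>2 * F) / (12 * N / m)) / 2
      = (m * (m - 1) + 6 * (q * (N * (m - 1))) + m * (m - 1) / 24 + m * N / 24) * F"
    using m N by (simp add: field_simps power2_eq_square)
  then have "(N * (m - 1)) * F \<le> (m * (m - 1) + 6 * (q * (N * (m - 1))) + m * (m - 1) / 24 + m * N / 24) * F"
    using ineq by (simp add: ac_simps)
  then have main: "N * (m - 1) \<le> m * (m - 1) + 6 * (q * (N * (m - 1))) + m * (m - 1) / 24 + m * N / 24"
    using F by simp
  have "q * (N * (m - 1)) \<le> 1/50 * (N * (m - 1))"
    using q N m by (intro mult_right_mono) auto
  moreover have "m * N \<le> 2 * (N * (m - 1))"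
    using m N by (simp add: algebra_simps)
  ultimately have "239/300 * (N * (m - 1)) \<le> 25/24 * (m * (m - 1))"
    using main by linarith
  then have "239/300 * N \<le> 25/24 * m"
    using m by (simp add: mult.assoc[symmetric])
  then show ?thesis using m by simp
qed

lemma card_eq_1_iff_ex1: "card A = 1 \<longleftrightarrow> (\<exists>!x. x \<in> A)"
  unfolding One_nat_def card_1_singleton_iff by (auto simp: set_eq_iff)

lemma sum_of_bool_eq_card:
  "finite A \<Longrightarrow> (\<Sum>x\<in>A. of_bool (P x)) = of_nat (card {x \<in> A. P x})"
  by (simp add: Int_def)

lemma card_filter_not_add_card_filter:
  "finite A \<Longrightarrow> card {x \<in> A. \<not> P x} + card {x \<in> A. P x} = card A"
  by (subst card_Un_disjoint[symmetric]) (auto intro: arg_cong[of _ _ card])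

lemma discordant_count_arith:
  fixes m q A N E F :: real
  assumes m: "2 \<le> m" and F: "0 < F" and q: "0 \<le> q" "q < 1/50" and A: "0 \<le> A"
    and N: "N \<le> 131/100 * m"
    and popular: "(1 - q) * (m * (m - 1) * F) \<le> A * N"
    and switching: "A * (m - 1) \<le> q * (m * (m - 1) * F) + E * F"
  shows "7/10 * (m - 1)\<^sup>2 \<le> E"
proof -
  define d where "d = m - 1"
  define s where "s = d * d * F"
  have d: "1 \<le> d" "m = d + 1" using m by (simp_all add: d_def)
  have "m * ((1 - q) * (d * F)) \<le> m * (131/100 * A)"
    using popular mult_left_mono[OF N A] by (simp add: d_def algebra_simps)
  then have "(1 - q) * (d * F) \<le> 131/100 * A"
    using m by simp
  then have "(1 - q) * (d * F) * d \<le> 131/100 * A * d"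
    by (rule mult_right_mono) (use d in simp)
  then have 1: "s - q * s \<le> 131/100 * (A * d)"
    by (simp add: s_def algebra_simps)
  have "q * (m * d * F) \<le> q * (2 * (d * d * F))"
    using d F q by (intro mult_left_mono) (auto simp: algebra_simps)
  then have 2: "A * d \<le> 2 * (q * s) + E * F"
    using switching by (simp add: s_def d_def)
  have 3: "q * s \<le> 1/50 * s"
    using q F d by (simp add: s_def mult_right_mono)
  have "0 \<le> s"
    using d F by (simp add: s_def)
  with 1 2 3 have "7/10 * s \<le> E * F"
    by argo
  then show ?thesis
    using F by (simp add: s_def d_def power2_eq_square mult.assoc)
qed

lemma dense_row_or_column_arith:
  fixes a a' b b' n :: real
  assumes "0 \<le> a" "0 \<le> b" "a + a' = n" "b + b' = n"
    and discordant: "7/10 * n\<^sup>2 \<le> b' * a + b * a'"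
  shows "7/10 * n \<le> a \<or> 7/10 * n \<le> b"
proof (rule ccontr)
  assume "\<not> ?thesis"
  then have lt: "a < 7/10 * n" "b < 7/10 * n" by auto
  then have n: "0 < n" using assms(1) by simp
  have "b' = n - b" "a' = n - a"
    using assms(3,4) by simp_all
  then have "b' * a + b * a' = a * n + b * n - 2 * (a * b)"
    by (simp only:) (simp add: algebra_simps)
  moreover have "a * n + b * n - 2 * (a * b) < 7/10 * n\<^sup>2"
  proof (cases "a \<le> n/2 \<and> b \<le> n/2")
    case True
    then have "0 \<le> (n/2 - a) * (n/2 - b)" by simp
    then have "a * n + b * n - 2 * (a * b) \<le> n\<^sup>2 / 2"
      by (simp add: algebra_simps power2_eq_square)
    also have "\<dots> < 7/10 * n\<^sup>2" using n by simp
    finally show ?thesis .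
  next
    case False
    then consider "n/2 < a" | "n/2 < b" by linarith
    then show ?thesis
    proof cases
      case 1
      then have "b * (n - 2 * a) \<le> 0" using assms(2) by (simp add: mult_nonneg_nonpos)
      moreover have "a * n < 7/10 * n\<^sup>2" using lt n by (simp add: power2_eq_square)
      ultimately show ?thesis by (simp add: algebra_simps)
    next
      case 2
      then have "a * (n - 2 * b) \<le> 0" using assms(1) by (simp add: mult_nonneg_nonpos)
      moreover have "b * n < 7/10 * n\<^sup>2" using lt n by (simp add: power2_eq_square)
      ultimately show ?thesis by (simp add: algebra_simps)
    qed
  qed
  ultimately show False using discordant by simp
qed

lemma dense_line_arith:
  fixes m q N C K u :: real
  assumes m: "2 \<le> m" and q: "0 \<le> q" and N: "N \<le> 131/100 * m"
    and C: "1 + 7/10 * (m - 1) \<le> C" and K: "K = N - C" and u: "u = m - C" "0 \<le> u"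
    and hitless: "u * ((m - 1) - K) \<le> q * m * (m - 1)"
  shows "(1 - 13 * q) * m \<le> C"
proof -
  have "8/100 * (m - 1) \<le> (m - 1) - K"
    using m N C K by argo
  then have "u * (8/100 * (m - 1)) \<le> u * ((m - 1) - K)"
    using u(2) by (rule mult_left_mono)
  with hitless have "(8/100 * u) * (m - 1) \<le> (q * m) * (m - 1)"
    by (simp add: algebra_simps)
  then have "8/100 * u \<le> q * m"
    using m by simp
  moreover have "0 \<le> q * m" using q m by simp
  ultimately show ?thesis using u by (simp add: algebra_simps)
qed

section \<open>Moments of the number of large positions on a diagonal\<close>

locale diagonals =
  fixes X Y :: "nat set" and L :: "(nat \<times> nat) set"
  assumes finite_X: "finite X" and finite_Y: "finite Y" and card_eq: "card X = card Y"
begin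

definition hits :: "(nat \<Rightarrow> nat) \<Rightarrow> nat" where
  "hits \<sigma> = card {i \<in> X. (i, \<sigma> i) \<in> L}"

definition large :: "(nat \<times> nat) set" where
  "large = L \<inter> X \<times> Y"

abbreviation good :: "(nat \<Rightarrow> nat) set" where
  "good \<equiv> {\<sigma> \<in> bijections X Y. hits \<sigma> = 1}"

abbreviation bad :: "(nat \<Rightarrow> nat) set" where
  "bad \<equiv> {\<sigma> \<in> bijections X Y. hits \<sigma> \<noteq> 1}"

lemmas finite_bij = finite_bijections[OF finite_X finite_Y]
lemmas card_bij = card_bijections[OF finite_X finite_Y card_eq]
lemmas card_bij_fixing = card_bijections_fixing[OF finite_X finite_Y card_eq]
lemmas card_bij_fixing2 = card_bijections_fixing2[OF finite_X finite_Y card_eq]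
lemmas card_bij_fixing2_le = card_bijections_fixing2_le[OF finite_X finite_Y card_eq]

lemma finite_large: "finite large"
  using finite_X finite_Y by (simp add: large_def)

lemma card_good_add_card_bad: "card good + card bad = fact (card X)"
proof -
  have "card (good \<union> bad) = card good + card bad"
    using finite_bij by (intro card_Un_disjoint) auto
  moreover have "good \<union> bad = bijections X Y" by auto
  ultimately show ?thesis using card_bij by simp
qed

lemma card_bad_le_iff:
  fixes q :: real
  shows "card bad \<le> q * fact (card X) \<longleftrightarrow> (1 - q) * fact (card X) \<le> card good"
proof -
  have "real (card good) + real (card bad) = fact (card X)"
    unfolding of_nat_add[symmetric] card_good_add_card_bad by (rule of_nat_fact)
  then show ?thesis
    by (auto simp: algebra_simps)
qed

lemma hits_eq_sum: "hits \<sigma> = (\<Sum>i\<in>X. of_bool ((i, \<sigma> i) \<in> L))"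
  using finite_X by (simp add: hits_def Int_def)

lemma card_large_eq_sum: "card large = (\<Sum>i\<in>X. card {j \<in> Y. (i, j) \<in> L})"
proof -
  have "large = Sigma X (\<lambda>i. {j \<in> Y. (i, j) \<in> L})"
    by (auto simp: large_def)
  then show ?thesis using finite_X finite_Y by (simp add: card_SigmaI)
qed

lemma card_bij_hitting:
  assumes "i \<in> X"
  shows "card {\<sigma> \<in> bijections X Y. (i, \<sigma> i) \<in> L} = card {j \<in> Y. (i, j) \<in> L} * fact (card X - 1)"
proof -
  have "{\<sigma> \<in> bijections X Y. (i, \<sigma> i) \<in> L}
      = (\<Union>j\<in>{j \<in> Y. (i, j) \<in> L}. {\<sigma> \<in> bijections X Y. \<sigma> i = j})"
    using bijectionsD(2)[OF _ assms] by auto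
  then have "card {\<sigma> \<in> bijections X Y. (i, \<sigma> i) \<in> L}
      = (\<Sum>j\<in>{j \<in> Y. (i, j) \<in> L}. card {\<sigma> \<in> bijections X Y. \<sigma> i = j})"
    by (simp add: card_UN_disjoint finite_Y finite_bij disjoint_iff)
  also have "\<dots> = card {j \<in> Y. (i, j) \<in> L} * fact (card X - 1)"
    using card_bij_fixing[OF assms] by simp
  finally show ?thesis .
qed

lemma card_bij_hitting2_le:
  assumes "i \<in> X" "i' \<in> X" "i \<noteq> i'"
  shows "card {\<sigma> \<in> bijections X Y. (i, \<sigma> i) \<in> L \<and> (i', \<sigma> i') \<in> L}
    \<le> card {j \<in> Y. (i, j) \<in> L} * card {j \<in> Y. (i', j) \<in> L} * fact (card X - 2)"
proof -
  let ?J = "{j \<in> Y. (i, j) \<in> L} \<times> {j \<in> Y. (i', j) \<in> L}"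
  let ?F = "\<lambda>p. {\<sigma> \<in> bijections X Y. \<sigma> i = fst p \<and> \<sigma> i' = snd p}"
  have J: "finite ?J" using finite_Y by simp
  have "{\<sigma> \<in> bijections X Y. (i, \<sigma> i) \<in> L \<and> (i', \<sigma> i') \<in> L} \<subseteq> (\<Union>p\<in>?J. ?F p)"
  proof
    fix \<sigma> assume \<sigma>: "\<sigma> \<in> {\<sigma> \<in> bijections X Y. (i, \<sigma> i) \<in> L \<and> (i', \<sigma> i') \<in> L}"
    then have "(\<sigma> i, \<sigma> i') \<in> ?J" using bijectionsD(2)[of \<sigma> X Y] assms by auto
    moreover have "\<sigma> \<in> ?F (\<sigma> i, \<sigma> i')" using \<sigma> by simp
    ultimately show "\<sigma> \<in> (\<Union>p\<in>?J. ?F p)" by blast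
  qed
  moreover have "finite (\<Union>p\<in>?J. ?F p)"
    using J finite_bij by simp
  ultimately have "card {\<sigma> \<in> bijections X Y. (i, \<sigma> i) \<in> L \<and> (i', \<sigma> i') \<in> L} \<le> card (\<Union>p\<in>?J. ?F p)"
    by (rule card_mono[rotated])
  also have "\<dots> \<le> (\<Sum>p\<in>?J. card (?F p))"
    using J by (rule card_UN_le)
  also have "\<dots> \<le> (\<Sum>p\<in>?J. fact (card X - 2))"
  proof (rule sum_mono)
    fix p assume "p \<in> ?J"
    then show "card (?F p) \<le> fact (card X - 2)"
      using card_bij_fixing2_le[OF assms(1) _ assms(2) _ assms(3), of "fst p" "snd p"] by auto
  qed
  finally show ?thesis
    using finite_Y by (simp add: card_cartesian_product)
qed

lemma sum_hits: "(\<Sum>\<sigma>\<in>bijections X Y. hits \<sigma>) = card large * fact (card X - 1)"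
proof -
  have "(\<Sum>\<sigma>\<in>bijections X Y. hits \<sigma>) = (\<Sum>i\<in>X. \<Sum>\<sigma>\<in>bijections X Y. of_bool ((i, \<sigma> i) \<in> L))"
    by (simp add: hits_eq_sum sum.swap[of _ _ X])
  also have "\<dots> = (\<Sum>i\<in>X. card {j \<in> Y. (i, j) \<in> L} * fact (card X - 1))"
    using finite_bij card_bij_hitting by (simp add: Int_def)
  finally show ?thesis by (simp add: card_large_eq_sum sum_distrib_right)
qed

lemma sum_hits_squared_le:
  "(\<Sum>\<sigma>\<in>bijections X Y. hits \<sigma> ^ 2) \<le> card large * fact (card X - 1) + card large ^ 2 * fact (card X - 2)"
proof -
  let ?row = "\<lambda>i. card {j \<in> Y. (i, j) \<in> L}"
  have "hits \<sigma> ^ 2 = (\<Sum>i\<in>X. \<Sum>i'\<in>X. of_bool ((i, \<sigma> i) \<in> L \<and> (i', \<sigma> i') \<in> L))" for \<sigma>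
    unfolding hits_eq_sum power2_eq_square sum_product by (simp add: of_bool_conj)
  then have "(\<Sum>\<sigma>\<in>bijections X Y. hits \<sigma> ^ 2)
      = (\<Sum>i\<in>X. \<Sum>i'\<in>X. \<Sum>\<sigma>\<in>bijections X Y. of_bool ((i, \<sigma> i) \<in> L \<and> (i', \<sigma> i') \<in> L))"
    by (simp add: sum.swap[of _ "bijections X Y"])
  also have "\<dots> = (\<Sum>i\<in>X. \<Sum>i'\<in>X. card {\<sigma> \<in> bijections X Y. (i, \<sigma> i) \<in> L \<and> (i', \<sigma> i') \<in> L})"
    using finite_bij by (simp add: Int_def)
  also have "\<dots> \<le> (\<Sum>i\<in>X. \<Sum>i'\<in>X. (if i' = i then ?row i * fact (card X - 1) else 0)
      + ?row i * ?row i' * fact (card X - 2))"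
    by (intro sum_mono) (auto simp: card_bij_hitting card_bij_hitting2_le)
  also have "\<dots> = (\<Sum>i\<in>X. ?row i * fact (card X - 1)) + (\<Sum>i\<in>X. \<Sum>i'\<in>X. ?row i * ?row i' * fact (card X - 2))"
    using finite_X by (simp add: sum.distrib)
  also have "\<dots> = card large * fact (card X - 1) + card large ^ 2 * fact (card X - 2)"
    by (simp add: card_large_eq_sum power2_eq_square sum_product sum_distrib_left sum_distrib_right)
      (rule sum.swap)
  finally show ?thesis .
qed

lemma sum_hits_le_am_gm:
  fixes l :: real
  assumes l: "0 < l"
  shows "(\<Sum>\<sigma>\<in>bijections X Y. real (hits \<sigma>))
    \<le> card good + (l * card {\<sigma> \<in> bijections X Y. 2 \<le> hits \<sigma>}
        + (\<Sum>\<sigma>\<in>bijections X Y. real (hits \<sigma>) ^ 2) / l) / 2"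
proof -
  have "(\<Sum>\<sigma>\<in>bijections X Y. real (hits \<sigma>))
      \<le> (\<Sum>\<sigma>\<in>bijections X Y. of_bool (hits \<sigma> = 1) + (l * of_bool (2 \<le> hits \<sigma>) + real (hits \<sigma>) ^ 2 / l) / 2)"
    by (intro sum_mono of_nat_le_one_hit_plus_am_gm l)
  also have "\<dots> = card good + (l * card {\<sigma> \<in> bijections X Y. 2 \<le> hits \<sigma>}
      + (\<Sum>\<sigma>\<in>bijections X Y. real (hits \<sigma>) ^ 2) / l) / 2"
    by (simp add: sum.distrib sum_of_bool_eq_card finite_bij del: sum_of_bool_eq
        flip: sum_divide_distrib sum_distrib_left)
  finally show ?thesis .
qed

lemma card_large_le:
  fixes q :: real
  assumes m: "2 \<le> card X" and q: "q < 1/50" and bad: "card bad \<le> q * fact (card X)"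
  shows "card large \<le> 131/100 * card X"
proof (cases "card large = 0")
  case False
  let ?N = "real (card large)" and ?m = "real (card X)" and ?many = "{\<sigma> \<in> bijections X Y. 2 \<le> hits \<sigma>}"
  \<comment> \<open>The weight of the AM-GM step is free; this choice makes the bound close up at \<open>1.31 m\<close>.\<close>
  define l where "l = 12 * ?N / ?m"
  have l: "0 < l" using False m by (simp add: l_def)
  have "card good \<le> card (bijections X Y)"
    by (rule card_mono) (use finite_bij in auto)
  then have good: "card good \<le> (fact (card X) :: real)"
    unfolding card_bij by (metis of_nat_fact of_nat_mono)
  have "card ?many \<le> card bad"
    by (rule card_mono) (use finite_bij in auto)
  then have many: "card ?many \<le> q * fact (card X)"
    using bad by linarith
  have "real (\<Sum>\<sigma>\<in>bijections X Y. hits \<sigma> ^ 2)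
      \<le> real (card large * fact (card X - 1) + card large ^ 2 * fact (card X - 2))"
    using sum_hits_squared_le by (simp only: of_nat_le_iff)
  then have squares: "(\<Sum>\<sigma>\<in>bijections X Y. real (hits \<sigma>) ^ 2)
      \<le> ?N * fact (card X - 1) + ?N\<^sup>2 * fact (card X - 2)"
    by (simp only: of_nat_sum of_nat_add of_nat_mult of_nat_power of_nat_fact)
  have "?N * fact (card X - 1) = (\<Sum>\<sigma>\<in>bijections X Y. real (hits \<sigma>))"
    by (simp only: of_nat_sum[symmetric] sum_hits of_nat_mult of_nat_fact)
  also have "\<dots> \<le> card good + (l * card ?many + (\<Sum>\<sigma>\<in>bijections X Y. real (hits \<sigma>) ^ 2) / l) / 2"
    using l by (rule sum_hits_le_am_gm)
  also have "\<dots> \<le> fact (card X) + (l * (q * fact (card X)) + (?N * fact (card X - 1) + ?N\<^sup>2 * fact (card X - 2)) / l) / 2"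
    using good many squares l by (intro add_mono divide_right_mono mult_left_mono) auto
  finally have "?N * ((?m - 1) * fact (card X - 2)) \<le> ?m * (?m - 1) * fact (card X - 2)
      + (l * (q * (?m * (?m - 1) * fact (card X - 2)))
         + (?N * ((?m - 1) * fact (card X - 2)) + ?N\<^sup>2 * fact (card X - 2)) / l) / 2"
    unfolding fact_diff_one_eq[OF m] fact_eq_diff_two[OF m] .
  then show ?thesis
    using m q False by (intro large_count_arith[of ?m "fact (card X - 2)" ?N q]) (simp_all add: l_def)
qed simp

section \<open>Switching at a popular large position\<close>

lemma hits_eq_1_iff: "hits \<sigma> = 1 \<longleftrightarrow> (\<exists>!i. i \<in> X \<and> (i, \<sigma> i) \<in> L)"
  unfolding hits_def card_eq_1_iff_ex1 by simp

lemma hits_eq_0_iff: "hits \<sigma> = 0 \<longleftrightarrow> (\<forall>i\<in>X. (i, \<sigma> i) \<notin> L)"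
  using finite_X by (auto simp: hits_def)

definition good_through :: "nat \<Rightarrow> nat \<Rightarrow> (nat \<Rightarrow> nat) set" where
  "good_through k j = {\<sigma> \<in> good. \<sigma> k = j}"

lemma card_good_eq_sum: "card good = (\<Sum>(k, j)\<in>large. card (good_through k j))"
proof -
  let ?G = "\<lambda>p. good_through (fst p) (snd p)"
  have "good = (\<Union>p\<in>large. ?G p)"
  proof
    show "good \<subseteq> (\<Union>p\<in>large. ?G p)"
    proof
      fix \<sigma> assume \<sigma>: "\<sigma> \<in> good"
      then have "hits \<sigma> = 1" by simp
      then obtain i where i: "i \<in> X" "(i, \<sigma> i) \<in> L"
        unfolding hits_eq_1_iff by blast
      moreover have "\<sigma> i \<in> Y"
        using \<sigma> i bijectionsD(2) by blast
      ultimately show "\<sigma> \<in> (\<Union>p\<in>large. ?G p)"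
        using \<sigma> by (auto simp: large_def good_through_def intro!: bexI[of _ "(i, \<sigma> i)"])
    qed
  qed (auto simp: good_through_def)
  moreover have "\<forall>p\<in>large. \<forall>p'\<in>large. p \<noteq> p' \<longrightarrow> ?G p \<inter> ?G p' = {}"
  proof (intro ballI impI)
    fix p p' assume p: "p \<in> large" "p' \<in> large" "p \<noteq> p'"
    show "?G p \<inter> ?G p' = {}"
    proof (rule ccontr)
      assume "?G p \<inter> ?G p' \<noteq> {}"
      then obtain \<sigma> where "hits \<sigma> = 1" "\<sigma> (fst p) = snd p" "\<sigma> (fst p') = snd p'"
        by (auto simp: good_through_def)
      moreover from this have "fst p = fst p'"
        using p unfolding hits_eq_1_iff large_def by auto
      ultimately show False
        using p(3) by (simp add: prod_eq_iff)
    qed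
  qed
  moreover have "\<forall>p\<in>large. finite (?G p)"
    using finite_bij by (simp add: good_through_def)
  ultimately show ?thesis
    using finite_large by (simp add: card_UN_disjoint case_prod_beta)
qed

lemma exists_popular_large:
  assumes "good \<noteq> {}"
  shows "\<exists>(k, j)\<in>large. card good \<le> card (good_through k j) * card large"
proof (rule ccontr)
  let ?g = "\<lambda>p. card (good_through (fst p) (snd p))"
  assume "\<not> ?thesis"
  then have less: "?g p * card large < card good" if "p \<in> large" for p
    using that by (auto simp: not_le)
  have "card good \<noteq> 0"
    using assms finite_bij by simp
  then have "large \<noteq> {}"
    using card_good_eq_sum by auto
  have "card good * card large = (\<Sum>p\<in>large. ?g p * card large)"
    unfolding card_good_eq_sum by (simp add: case_prod_beta sum_distrib_right)
  also have "\<dots> < (\<Sum>p\<in>large. card good)"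
    using finite_large \<open>large \<noteq> {}\<close> less by (rule sum_strict_mono)
  also have "\<dots> = card good * card large"
    by simp
  finally show False by simp
qed

definition switch :: "nat \<Rightarrow> (nat \<Rightarrow> nat) \<times> nat \<Rightarrow> nat \<Rightarrow> nat" where
  "switch k = (\<lambda>(\<sigma>, i). \<sigma> \<circ> transpose k i)"

definition switchable :: "nat \<Rightarrow> nat \<Rightarrow> ((nat \<Rightarrow> nat) \<times> nat) set" where
  "switchable k j = {\<sigma> \<in> bijections X Y. \<sigma> k = j} \<times> (X - {k})"

lemma switch_in_bijections:
  assumes "p \<in> switchable k j" "k \<in> X"
  shows "switch k p \<in> bijections X Y"
proof -
  obtain \<sigma> i where p: "p = (\<sigma>, i)" and \<sigma>: "\<sigma> \<in> bijections X Y" and i: "i \<in> X"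
    using assms(1) by (auto simp: switchable_def)
  have "bij_betw (\<sigma> \<circ> transpose k i) X Y"
    using bijectionsD(1)[OF \<sigma>] assms(2) i by (intro bij_betw_trans[of _ X X]) simp_all
  moreover have "(\<sigma> \<circ> transpose k i) x = undefined" if "x \<notin> X" for x
    using that assms(2) i bijectionsD(3)[OF \<sigma>] by (auto simp: transpose_def)
  ultimately show ?thesis by (simp add: p switch_def bijectionsI)
qed

lemma inj_on_switch:
  assumes "k \<in> X"
  shows "inj_on (switch k) (switchable k j)"
proof (rule inj_onI, clarify)
  fix \<sigma> i \<sigma>' i'
  assume p: "(\<sigma>, i) \<in> switchable k j" "(\<sigma>', i') \<in> switchable k j"
    and eq: "switch k (\<sigma>, i) = switch k (\<sigma>', i')"
  then have \<sigma>: "\<sigma>' \<in> bijections X Y" "\<sigma> k = j" "\<sigma>' k = j" "i \<in> X" "i \<noteq> k" "i' \<in> X" "i' \<noteq> k"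
    by (auto simp: switchable_def)
  have eq': "\<sigma> (transpose k i x) = \<sigma>' (transpose k i' x)" for x
    using eq by (simp add: switch_def fun_eq_iff)
  have "\<sigma>' (transpose k i' i) = \<sigma>' k"
    using eq'[of i] \<sigma> by simp
  then have "transpose k i' i = k"
    using \<sigma> assms by (subst (asm) bijections_eq_iff) (auto simp: transpose_def)
  then have "i = i'"
    by (metis transpose_eq_iff)
  moreover have "\<sigma> x = \<sigma>' x" for x
    using eq'[of "transpose k i x"] \<open>i = i'\<close> by simp
  ultimately show "\<sigma> = \<sigma>' \<and> i = i'" by auto
qed

lemma good_switch_discordant:
  assumes p: "(\<sigma>, i) \<in> switchable k j" and kj: "k \<in> X" "(k, j) \<in> L"
    and good: "hits \<sigma> = 1" "hits (switch k (\<sigma>, i)) = 1"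
  shows "((k, \<sigma> i) \<in> L) \<noteq> ((i, j) \<in> L)"
proof
  let ?\<sigma>' = "switch k (\<sigma>, i)"
  have i: "i \<in> X" "i \<noteq> k" and \<sigma>k: "\<sigma> k = j"
    using p by (auto simp: switchable_def)
  have \<sigma>': "?\<sigma>' k = \<sigma> i" "?\<sigma>' i = j" "x \<noteq> k \<Longrightarrow> x \<noteq> i \<Longrightarrow> ?\<sigma>' x = \<sigma> x" for x
    using \<sigma>k by (auto simp: switch_def)
  assume same: "((k, \<sigma> i) \<in> L) = ((i, j) \<in> L)"
  show False
  proof (cases "(i, j) \<in> L")
    case True
    then show False
      using good(2) same i kj \<sigma>' unfolding hits_eq_1_iff by metis
  next
    case False
    obtain x where x: "x \<in> X" "(x, ?\<sigma>' x) \<in> L"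
      using good(2) unfolding hits_eq_1_iff by blast
    then have "x \<noteq> k" "x \<noteq> i"
      using False same \<sigma>' by auto
    then show False
      using good(1) x kj \<sigma>k \<sigma>' unfolding hits_eq_1_iff by metis
  qed
qed

definition discordant :: "nat \<Rightarrow> nat \<Rightarrow> (nat \<times> nat) set" where
  "discordant k j = {(r, c) \<in> (X - {k}) \<times> (Y - {j}). ((k, c) \<in> L) \<noteq> ((r, j) \<in> L)}"

lemma card_discordant:
  "card (discordant k j)
    = card {r \<in> X - {k}. (r, j) \<notin> L} * card {c \<in> Y - {j}. (k, c) \<in> L}
      + card {r \<in> X - {k}. (r, j) \<in> L} * card {c \<in> Y - {j}. (k, c) \<notin> L}"
proof -
  have "discordant k j = {r \<in> X - {k}. (r, j) \<notin> L} \<times> {c \<in> Y - {j}. (k, c) \<in> L}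
      \<union> {r \<in> X - {k}. (r, j) \<in> L} \<times> {c \<in> Y - {j}. (k, c) \<notin> L}"
    by (auto simp: discordant_def)
  then show ?thesis
    using finite_X finite_Y by (simp add: card_Un_disjoint card_cartesian_product disjoint_iff)
qed

lemma card_switchable_discordant_le:
  assumes "k \<in> X" "j \<in> Y"
  shows "card {(\<sigma>, i) \<in> switchable k j. ((k, \<sigma> i) \<in> L) \<noteq> ((i, j) \<in> L)}
    \<le> card (discordant k j) * fact (card X - 2)"
proof -
  let ?F = "\<lambda>(r, c). {\<sigma> \<in> bijections X Y. \<sigma> k = j \<and> \<sigma> r = c} \<times> {r}"
  have "finite (discordant k j)"
    using finite_X finite_Y by (auto simp: discordant_def intro: finite_subset)
  moreover have "{(\<sigma>, i) \<in> switchable k j. ((k, \<sigma> i) \<in> L) \<noteq> ((i, j) \<in> L)} \<subseteq> (\<Union>rc\<in>discordant k j. ?F rc)"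
  proof clarify
    fix \<sigma> i assume "(\<sigma>, i) \<in> switchable k j" "((k, \<sigma> i) \<in> L) \<noteq> ((i, j) \<in> L)"
    moreover from this have "\<sigma> i \<in> Y" "\<sigma> i \<noteq> j"
      using assms(1) bijectionsD(2) bijections_eq_iff[of \<sigma> X Y i k] by (auto simp: switchable_def)
    ultimately show "(\<sigma>, i) \<in> (\<Union>rc\<in>discordant k j. ?F rc)"
      by (auto simp: switchable_def discordant_def intro!: bexI[of _ "(i, \<sigma> i)"])
  qed
  moreover have "finite (?F rc)" for rc
    using finite_bij by (auto simp: case_prod_beta)
  ultimately have "card {(\<sigma>, i) \<in> switchable k j. ((k, \<sigma> i) \<in> L) \<noteq> ((i, j) \<in> L)}
      \<le> card (\<Union>rc\<in>discordant k j. ?F rc)"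
    by (intro card_mono) auto
  also have "\<dots> \<le> (\<Sum>rc\<in>discordant k j. card (?F rc))"
    using \<open>finite (discordant k j)\<close> by (rule card_UN_le)
  also have "\<dots> = (\<Sum>rc\<in>discordant k j. fact (card X - 2))"
    using assms by (intro sum.cong) (auto simp: discordant_def card_cartesian_product card_bij_fixing2)
  finally show ?thesis by simp
qed

lemma card_switched_bad_le:
  assumes "k \<in> X"
  shows "card {p \<in> switchable k j. hits (switch k p) \<noteq> 1} \<le> card bad"
proof (rule card_inj_on_le)
  show "inj_on (switch k) {p \<in> switchable k j. hits (switch k p) \<noteq> 1}"
    using inj_on_switch[OF assms] by (rule inj_on_subset) blast
  show "switch k ` {p \<in> switchable k j. hits (switch k p) \<noteq> 1} \<subseteq> bad"
    using switch_in_bijections[OF _ assms] by auto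
qed (use finite_bij in simp)

lemma card_good_through_le:
  assumes "(k, j) \<in> large"
  shows "card (good_through k j) * (card X - 1) \<le> card bad + card (discordant k j) * fact (card X - 2)"
proof -
  have k: "k \<in> X" and j: "j \<in> Y" and kj: "(k, j) \<in> L"
    using assms by (auto simp: large_def)
  let ?bad_through = "{\<sigma> \<in> bijections X Y. \<sigma> k = j \<and> hits \<sigma> \<noteq> 1}"
  let ?A = "{(\<sigma>, i) \<in> switchable k j. hits \<sigma> \<noteq> 1}"
  let ?B = "{p \<in> switchable k j. hits (switch k p) \<noteq> 1}"
  let ?E = "{(\<sigma>, i) \<in> switchable k j. ((k, \<sigma> i) \<in> L) \<noteq> ((i, j) \<in> L)}"
  have "p \<in> ?A \<union> ?B \<union> ?E" if "p \<in> switchable k j" for p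
    using that good_switch_discordant[OF _ k kj] by (cases p) auto
  then have "switchable k j \<subseteq> ?A \<union> ?B \<union> ?E" ..
  moreover have "finite (?A \<union> ?B \<union> ?E)"
    using finite_bij finite_X by (intro finite_subset[OF _ finite_cartesian_product]) (auto simp: switchable_def)
  ultimately have "card (switchable k j) \<le> card (?A \<union> ?B \<union> ?E)"
    by (rule card_mono[rotated])
  then have "card (switchable k j) \<le> card ?A + card ?B + card ?E"
    using card_Un_le[of "?A \<union> ?B" ?E] card_Un_le[of ?A ?B] by linarith
  moreover have "?A = ?bad_through \<times> (X - {k})"
    by (auto simp: switchable_def)
  moreover have "card ?B \<le> card bad"
    using card_switched_bad_le[OF k] .
  moreover have "card (switchable k j) = fact (card X - 1) * (card X - 1)"
    using k j finite_X by (simp add: switchable_def card_cartesian_product card_bij_fixing)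
  moreover have "fact (card X - 1) = card ?bad_through + card (good_through k j)"
  proof -
    have "{\<sigma> \<in> bijections X Y. \<sigma> k = j} = ?bad_through \<union> good_through k j"
      by (auto simp: good_through_def)
    then show ?thesis
      using card_bij_fixing[OF k j] finite_bij
      by (simp add: card_Un_disjoint good_through_def disjoint_iff)
  qed
  ultimately show ?thesis
    using card_switchable_discordant_le[OF k j] finite_X k
    by (simp add: card_cartesian_product add_mult_distrib)
qed

section \<open>A dense line is strong\<close>

definition is_line :: "(nat \<times> nat) set \<Rightarrow> bool" where
  "is_line l \<longleftrightarrow> (\<exists>k\<in>X. l = {k} \<times> Y) \<or> (\<exists>j\<in>Y. l = X \<times> {j})"

lemma line_subset: "is_line l \<Longrightarrow> l \<subseteq> X \<times> Y"
  by (auto simp: is_line_def)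

lemma card_line: "is_line l \<Longrightarrow> card l = card X"
  using card_eq by (auto simp: is_line_def card_cartesian_product)

lemma line_meets: "is_line l \<Longrightarrow> p \<in> l \<Longrightarrow> p' \<in> l \<Longrightarrow> fst p' = fst p \<or> snd p' = snd p"
  by (auto simp: is_line_def)

lemma card_row_Int: "card (({k} \<times> Y) \<inter> L) = card {j \<in> Y. (k, j) \<in> L}"
proof -
  have "({k} \<times> Y) \<inter> L = Pair k ` {j \<in> Y. (k, j) \<in> L}" by auto
  then show ?thesis by (simp add: card_image inj_on_def)
qed

lemma card_col_Int: "card ((X \<times> {j}) \<inter> L) = card {i \<in> X. (i, j) \<in> L}"
proof -
  have "(X \<times> {j}) \<inter> L = (\<lambda>i. (i, j)) ` {i \<in> X. (i, j) \<in> L}" by auto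
  then show ?thesis by (simp add: card_image inj_on_def)
qed

lemma card_row_eq_Suc:
  assumes "j \<in> Y" "(k, j) \<in> L"
  shows "card {c \<in> Y. (k, c) \<in> L} = Suc (card {c \<in> Y - {j}. (k, c) \<in> L})"
proof -
  have "{c \<in> Y. (k, c) \<in> L} = insert j {c \<in> Y - {j}. (k, c) \<in> L}" using assms by auto
  then show ?thesis using finite_Y by simp
qed

lemma card_col_eq_Suc:
  assumes "k \<in> X" "(k, j) \<in> L"
  shows "card {r \<in> X. (r, j) \<in> L} = Suc (card {r \<in> X - {k}. (r, j) \<in> L})"
proof -
  have "{r \<in> X. (r, j) \<in> L} = insert k {r \<in> X - {k}. (r, j) \<in> L}" using assms by auto
  then show ?thesis using finite_X by simp
qed

lemma has_strong_line_if_line: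
  fixes p :: real
  assumes "is_line l" "(1 - p) * card X \<le> card (l \<inter> L)"
  shows "has_strong_line L X Y p"
  using assms(1) unfolding is_line_def
proof (elim disjE bexE)
  fix k assume "k \<in> X" "l = {k} \<times> Y"
  then have "strong_row L X Y p k"
    using assms(2) card_eq card_row_Int[of k] by (simp add: strong_row_def)
  then show ?thesis by (auto simp: has_strong_line_def)
next
  fix j assume "j \<in> Y" "l = X \<times> {j}"
  then have "strong_col L X Y p j"
    using assms(2) card_col_Int[of j] by (simp add: strong_col_def)
  then show ?thesis by (auto simp: has_strong_line_def)
qed

lemma card_hitless_fixing_ge:
  assumes a: "a \<in> X" and c: "c \<in> Y" and ac: "(a, c) \<notin> L"
  shows "fact (card X - 1) \<le> card {\<sigma> \<in> bijections X Y. \<sigma> a = c \<and> hits \<sigma> = 0}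
    + card {p \<in> large. fst p \<noteq> a \<and> snd p \<noteq> c} * fact (card X - 2)"
proof -
  let ?Z = "{\<sigma> \<in> bijections X Y. \<sigma> a = c \<and> hits \<sigma> = 0}"
  let ?K = "{p \<in> large. fst p \<noteq> a \<and> snd p \<noteq> c}"
  let ?F = "\<lambda>p. {\<sigma> \<in> bijections X Y. \<sigma> a = c \<and> \<sigma> (fst p) = snd p}"
  have K: "finite ?K" using finite_large by simp
  have "{\<sigma> \<in> bijections X Y. \<sigma> a = c} \<subseteq> ?Z \<union> (\<Union>p\<in>?K. ?F p)"
  proof
    fix \<sigma> assume \<sigma>: "\<sigma> \<in> {\<sigma> \<in> bijections X Y. \<sigma> a = c}"
    show "\<sigma> \<in> ?Z \<union> (\<Union>p\<in>?K. ?F p)"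
    proof (cases "hits \<sigma> = 0")
      case False
      then obtain i where i: "i \<in> X" "(i, \<sigma> i) \<in> L"
        unfolding hits_eq_0_iff by blast
      then have "i \<noteq> a" using \<sigma> ac by auto
      then have "\<sigma> i \<noteq> c" using \<sigma> i a bijections_eq_iff[of \<sigma> X Y i a] by auto
      moreover have "\<sigma> i \<in> Y" using \<sigma> i bijectionsD(2) by blast
      ultimately have "(i, \<sigma> i) \<in> ?K" using i \<open>i \<noteq> a\<close> by (simp add: large_def)
      moreover have "\<sigma> \<in> ?F (i, \<sigma> i)" using \<sigma> by simp
      ultimately show ?thesis by blast
    qed (use \<sigma> in simp)
  qed
  moreover have "finite (?Z \<union> (\<Union>p\<in>?K. ?F p))"
    using K finite_bij by simp
  ultimately have "card {\<sigma> \<in> bijections X Y. \<sigma> a = c} \<le> card (?Z \<union> (\<Union>p\<in>?K. ?F p))"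
    by (rule card_mono[rotated])
  also have "\<dots> \<le> card ?Z + card (\<Union>p\<in>?K. ?F p)"
    by (rule card_Un_le)
  also have "card (\<Union>p\<in>?K. ?F p) \<le> (\<Sum>p\<in>?K. card (?F p))"
    using K by (rule card_UN_le)
  also have "\<dots> \<le> (\<Sum>p\<in>?K. fact (card X - 2))"
  proof (rule sum_mono)
    fix p assume "p \<in> ?K"
    then show "card (?F p) \<le> fact (card X - 2)"
      using card_bij_fixing2_le[OF a c, of "fst p" "snd p"] by (auto simp: large_def)
  qed
  finally show ?thesis
    using card_bij_fixing[OF a c] by simp
qed

lemma card_hitless_fixing_line_ge:
  assumes l: "is_line l" and p: "p \<in> l - L"
  shows "fact (card X - 1)
    \<le> card {\<sigma> \<in> bijections X Y. \<sigma> (fst p) = snd p \<and> hits \<sigma> = 0} + card (large - l) * fact (card X - 2)"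
proof -
  have "p' \<notin> l" if "fst p' \<noteq> fst p" "snd p' \<noteq> snd p" for p'
    using line_meets[OF l, of p p'] p that by blast
  then have "{p' \<in> large. fst p' \<noteq> fst p \<and> snd p' \<noteq> snd p} \<subseteq> large - l"
    by blast
  then have "card {p' \<in> large. fst p' \<noteq> fst p \<and> snd p' \<noteq> snd p} \<le> card (large - l)"
    using finite_large by (intro card_mono) auto
  moreover have "fact (card X - 1) \<le> card {\<sigma> \<in> bijections X Y. \<sigma> (fst p) = snd p \<and> hits \<sigma> = 0}
      + card {p' \<in> large. fst p' \<noteq> fst p \<and> snd p' \<noteq> snd p} * fact (card X - 2)"
    using card_hitless_fixing_ge[of "fst p" "snd p"] p line_subset[OF l] by auto
  ultimately show ?thesis
    by (meson add_left_mono le_trans mult_le_mono1)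
qed

lemma card_hitless_line_ge:
  assumes l: "is_line l"
  shows "card (l - L) * fact (card X - 1)
    \<le> card {\<sigma> \<in> bijections X Y. hits \<sigma> = 0} + card (l - L) * (card (large - l) * fact (card X - 2))"
proof -
  let ?F = "\<lambda>p. {\<sigma> \<in> bijections X Y. \<sigma> (fst p) = snd p \<and> hits \<sigma> = 0}"
  let ?c = "card (large - l) * fact (card X - 2)"
  have fin: "finite (l - L)"
    using line_subset[OF l] finite_X finite_Y by (auto intro: finite_subset)
  have each: "fact (card X - 1) \<le> card (?F p) + ?c" if "p \<in> l - L" for p
    using card_hitless_fixing_line_ge[OF l that] by simp
  have disjoint: "?F p \<inter> ?F p' = {}" if "p \<in> l - L" "p' \<in> l - L" "p \<noteq> p'" for p p'
  proof (rule ccontr)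
    assume "?F p \<inter> ?F p' \<noteq> {}"
    then obtain \<sigma> where \<sigma>: "\<sigma> \<in> bijections X Y" "\<sigma> (fst p) = snd p" "\<sigma> (fst p') = snd p'"
      by auto
    have "fst p \<in> X" "fst p' \<in> X"
      using that(1,2) line_subset[OF l] by (auto simp: mem_Times_iff)
    then have "fst p = fst p'"
      using line_meets[OF l, of p p'] that \<sigma> bijections_eq_iff[of \<sigma> X Y "fst p" "fst p'"] by auto
    then show False
      using \<sigma> that(3) by (simp add: prod_eq_iff)
  qed
  have "card (l - L) * fact (card X - 1) = (\<Sum>p\<in>l - L. fact (card X - 1))"
    by simp
  also have "\<dots> \<le> (\<Sum>p\<in>l - L. card (?F p) + ?c)"
    by (rule sum_mono) (rule each)
  also have "\<dots> = card (\<Union>p\<in>l - L. ?F p) + card (l - L) * ?c"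
    using fin finite_bij disjoint by (simp add: sum.distrib card_UN_disjoint)
  also have "card (\<Union>p\<in>l - L. ?F p) \<le> card {\<sigma> \<in> bijections X Y. hits \<sigma> = 0}"
    using finite_bij by (intro card_mono) auto
  finally show ?thesis by simp
qed

lemma dense_line_is_strong:
  fixes q :: real
  assumes m: "2 \<le> card X" and q: "0 \<le> q" and N: "card large \<le> 131/100 * card X"
    and hitless: "card {\<sigma> \<in> bijections X Y. hits \<sigma> = 0} \<le> q * fact (card X)"
    and l: "is_line l" and dense: "1 + 7/10 * (real (card X) - 1) \<le> card (l \<inter> L)"
  shows "(1 - 13 * q) * card X \<le> card (l \<inter> L)"
proof -
  let ?m = "real (card X)" and ?F = "fact (card X - 2) :: real"
  have u: "real (card (l - L)) = ?m - card (l \<inter> L)"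
    using card_Int_Diff[of l L] card_line[OF l] finite_X finite_Y line_subset[OF l]
    by (simp add: finite_subset)
  have K: "real (card (large - l)) = real (card large) - real (card (l \<inter> L))"
  proof -
    have "large \<inter> l = l \<inter> L"
      using line_subset[OF l] by (auto simp: large_def)
    then show ?thesis
      using card_Int_Diff[of large l] finite_large by simp
  qed
  have "real (card (l - L) * fact (card X - 1))
      \<le> real (card {\<sigma> \<in> bijections X Y. hits \<sigma> = 0} + card (l - L) * (card (large - l) * fact (card X - 2)))"
    using card_hitless_line_ge[OF l] by (simp only: of_nat_le_iff)
  then have "real (card (l - L)) * ((?m - 1) * ?F)
      \<le> real (card {\<sigma> \<in> bijections X Y. hits \<sigma> = 0}) + real (card (l - L)) * (real (card (large - l)) * ?F)"
    unfolding of_nat_mult of_nat_add of_nat_fact fact_diff_one_eq[OF m] .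
  then have "real (card (l - L)) * ((?m - 1) * ?F)
      \<le> q * (?m * (?m - 1) * ?F) + real (card (l - L)) * (real (card (large - l)) * ?F)"
    using hitless unfolding fact_eq_diff_two[OF m] by linarith
  then have "(real (card (l - L)) * ((?m - 1) - real (card (large - l)))) * ?F \<le> (q * ?m * (?m - 1)) * ?F"
    by (simp add: algebra_simps)
  then have "real (card (l - L)) * ((?m - 1) - real (card (large - l))) \<le> q * ?m * (?m - 1)"
    by simp
  then show ?thesis
    using m by (intro dense_line_arith[OF _ q N dense K u]) simp_all
qed

lemma good_nonempty:
  fixes q :: real
  assumes "q < 1" "card bad \<le> q * fact (card X)"
  shows "good \<noteq> {}"
proof -
  have "0 < (1 - q) * fact (card X)"
    using assms(1) by simp
  also have "\<dots> \<le> card good"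
    using assms(2) card_bad_le_iff by blast
  finally show ?thesis
    by (metis card.empty of_nat_0 less_irrefl)
qed

lemma exists_discordant_large:
  fixes q :: real
  assumes m: "2 \<le> card X" and q: "0 \<le> q" "q < 1/50" and bad: "card bad \<le> q * fact (card X)"
  shows "\<exists>(k, j)\<in>large. 7/10 * (real (card X) - 1)\<^sup>2 \<le> card (discordant k j)"
proof -
  let ?m = "real (card X)" and ?F = "fact (card X - 2) :: real"
  have good: "(1 - q) * fact (card X) \<le> card good"
    using bad card_bad_le_iff by blast
  obtain k j where kj: "(k, j) \<in> large"
    and popular: "card good \<le> card (good_through k j) * card large"
    using exists_popular_large good_nonempty[OF _ bad] q by fastforce
  have "7/10 * (?m - 1)\<^sup>2 \<le> card (discordant k j)"
  proof (rule discordant_count_arith[of ?m ?F q "card (good_through k j)" "card large"])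
    show "card large \<le> 131/100 * ?m"
      using card_large_le[OF m q(2) bad] .
    have "(1 - q) * fact (card X) \<le> real (card (good_through k j) * card large)"
      using good popular by (simp only: of_nat_le_iff[symmetric, where 'a=real])
    then show "(1 - q) * (?m * (?m - 1) * ?F) \<le> card (good_through k j) * real (card large)"
      unfolding fact_eq_diff_two[OF m] by simp
    have "real (card (good_through k j) * (card X - 1))
        \<le> real (card bad + card (discordant k j) * fact (card X - 2))"
      using card_good_through_le[OF kj] by (simp only: of_nat_le_iff)
    then show "card (good_through k j) * (?m - 1) \<le> q * (?m * (?m - 1) * ?F) + card (discordant k j) * ?F"
      using bad m unfolding fact_eq_diff_two[OF m] by (simp add: of_nat_diff)
  qed (use m q in simp_all)
  then show ?thesis using kj by blast
qed

lemma dense_line_through_discordant: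
  assumes m: "2 \<le> card X" and kj: "(k, j) \<in> large"
    and discordant: "7/10 * (real (card X) - 1)\<^sup>2 \<le> card (discordant k j)"
  shows "\<exists>l. is_line l \<and> 1 + 7/10 * (real (card X) - 1) \<le> card (l \<inter> L)"
proof -
  let ?m = "real (card X)"
  have k: "k \<in> X" and j: "j \<in> Y" and kjL: "(k, j) \<in> L"
    using kj by (auto simp: large_def)
  define a where "a = card {c \<in> Y - {j}. (k, c) \<in> L}"
  define a' where "a' = card {c \<in> Y - {j}. (k, c) \<notin> L}"
  define b where "b = card {r \<in> X - {k}. (r, j) \<in> L}"
  define b' where "b' = card {r \<in> X - {k}. (r, j) \<notin> L}"
  have "a' + a = card X - 1" "b' + b = card X - 1"
    using card_filter_not_add_card_filter[of "X - {k}"] card_filter_not_add_card_filter[of "Y - {j}"]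
      finite_X finite_Y k j card_eq by (simp_all add: a_def a'_def b_def b'_def)
  then have "real a + real a' = ?m - 1" "real b + real b' = ?m - 1"
    using m by (simp_all add: of_nat_diff flip: of_nat_add)
  moreover have "card (discordant k j) = b' * a + b * a'"
    unfolding card_discordant a_def a'_def b_def b'_def ..
  ultimately have "7/10 * (?m - 1) \<le> a \<or> 7/10 * (?m - 1) \<le> b"
    using discordant by (intro dense_row_or_column_arith[where a' = "real a'" and b' = "real b'"]) simp_all
  then show ?thesis
  proof
    assume "7/10 * (?m - 1) \<le> a"
    moreover have "is_line ({k} \<times> Y)"
      using k by (auto simp: is_line_def)
    ultimately show ?thesis
      using card_row_Int[of k] card_row_eq_Suc[OF j kjL] a_def by (intro exI[of _ "{k} \<times> Y"]) simp
  next
    assume "7/10 * (?m - 1) \<le> b"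
    moreover have "is_line (X \<times> {j})"
      using j by (auto simp: is_line_def)
    ultimately show ?thesis
      using card_col_Int[of j] card_col_eq_Suc[OF k kjL] b_def by (intro exI[of _ "X \<times> {j}"]) simp
  qed
qed

lemma has_strong_line_if_card_1:
  fixes p :: real
  assumes "card X = 1" and "good \<noteq> {}" and "0 \<le> p"
  shows "has_strong_line L X Y p"
proof -
  obtain x y where X: "X = {x}" and Y: "Y = {y}"
    using assms(1) card_eq by (metis card_1_singletonE)
  obtain \<sigma> i where "\<sigma> \<in> bijections X Y" "i \<in> X" "(i, \<sigma> i) \<in> L"
    using assms(2) unfolding hits_eq_1_iff by blast
  then have "(x, y) \<in> L"
    using X Y bijectionsD(2) by blast
  then have "card (({x} \<times> Y) \<inter> L) = 1"
    using Y by simp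
  moreover have "is_line ({x} \<times> Y)"
    unfolding is_line_def using X by blast
  ultimately show ?thesis
    using assms(1,3) by (intro has_strong_line_if_line) auto
qed

lemma has_strong_line_if_few_bad:
  fixes q :: real
  assumes m: "1 \<le> card X" and q: "q < 1/50" and bad: "card bad \<le> q * fact (card X)"
  shows "has_strong_line L X Y (13 * q)"
proof -
  have "0 \<le> q * fact (card X)"
    using bad by (rule order_trans[rotated]) simp
  then have q0: "0 \<le> q"
    using fact_gt_zero[of "card X", where 'a=real] by (simp add: zero_le_mult_iff)
  show ?thesis
  proof (cases "card X = 1")
    case True
    then show ?thesis
      using has_strong_line_if_card_1[OF True good_nonempty[OF _ bad]] q q0 by simp
  next
    case False
    then have m2: "2 \<le> card X" using m by simp
    have "card {\<sigma> \<in> bijections X Y. hits \<sigma> = 0} \<le> card bad"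
      by (rule card_mono) (use finite_bij in auto)
    then have hitless: "card {\<sigma> \<in> bijections X Y. hits \<sigma> = 0} \<le> q * fact (card X)"
      using bad by linarith
    obtain k j where "(k, j) \<in> large" "7/10 * (real (card X) - 1)\<^sup>2 \<le> card (discordant k j)"
      using exists_discordant_large[OF m2 q0 q bad] by blast
    then obtain l where "is_line l" "1 + 7/10 * (real (card X) - 1) \<le> card (l \<inter> L)"
      using dense_line_through_discordant[OF m2] by blast
    then show ?thesis
      using dense_line_is_strong[OF m2 q0 card_large_le[OF m2 q bad] hitless]
      by (intro has_strong_line_if_line) auto
  qed
qed

lemma good_diagonal_iff: "good_diagonal L (gen_diagonal \<sigma> X) \<longleftrightarrow> hits \<sigma> = 1"
proof -
  have "gen_diagonal \<sigma> X \<inter> L = (\<lambda>i. (i, \<sigma> i)) ` {i \<in> X. (i, \<sigma> i) \<in> L}"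
    by (auto simp: gen_diagonal_def)
  then have "card (gen_diagonal \<sigma> X \<inter> L) = hits \<sigma>"
    by (simp add: hits_def card_image inj_on_def)
  then show ?thesis
    by (simp add: good_diagonal_def)
qed

lemma q_good_iff:
  fixes q :: real
  shows "q_good L X Y q \<longleftrightarrow> card bad \<le> q * fact (card X)"
proof -
  have "q_good L X Y q \<longleftrightarrow> (1 - q) * fact (card X) \<le> card good"
    using card_bij by (simp add: q_good_def good_diagonal_iff pos_le_divide_eq)
  then show ?thesis
    using card_bad_le_iff by blast
qed

end

theorem lemma2p16:
  fixes n :: nat and A :: "nat \<Rightarrow> nat \<Rightarrow> real" and L :: "(nat \<times> nat) set"
    and X Y :: "nat set" and q :: real
  assumes "L \<subseteq> {1..n} \<times> {1..n}"
    and "is_restriction n X Y"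
    and "card X \<ge> 1"
    and "q < 1/50"
    and "q_good L X Y q"
  shows "has_strong_line L X Y (13 * q)"
proof -
  interpret diagonals X Y L
    using assms(2) by unfold_locales (auto simp: is_restriction_def intro: finite_subset)
  show ?thesis
    using assms(3,4,5) by (intro has_strong_line_if_few_bad) (auto simp: q_good_iff)
qed

end
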